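(* Let $n\ge 1$ and let $I=(i_1,\ldots,i_r)$ be a composition of $n$. Then $$\sum_{\sigma\in\mathfrak S_n,\ \mathrm{SC}(\sigma)=I} q^{\binom{n}{2}-\mathrm{inv}(\sigma)} \;=\; q^{\mathrm{maj}(I)}\,\frac{[n]_q!}{[i_1]_q\,[i_1+i_2]_q\cdots[i_1+i_2+\cdots+i_r]_q},$$ where $\mathrm{maj}(I)=\sum_{j=1}^{r-1}(i_1+\cdots+i_j)$. (The right-hand side is the polynomial $c_I(q)$.)
   Context: Permutations $\sigma\in\mathfrak S_n$ are viewed as words $\sigma_1\sigma_2\cdots\sigma_n$. A word $a_1a_2\cdots a_m$ of integers is initially dominated if $a_1>a_j$ for all $2\le j\le m$. Every permutation has a unique factorization $\sigma=u_1u_2\cdots u_r$ into initially dominated words whose first (maximal) letters are increasing; the saillance composition of $\sigma$ is $\mathrm{SC}(\sigma)=(|u_1|,\ldots,|u_r|)$. $\mathrm{inv}(\sigma)$ is the number of inversions of $\sigma$, $[m]_q=1+q+\cdots+q^{m-1}$ and $[n]_q!=[1]_q[2]_q\cdots[n]_q$. *)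

theory Defs
  imports "HOL-Combinatorics.Multiset_Permutations" "HOL-Computational_Algebra.Polynomial"
begin

definition init_dominated :: "nat list \<Rightarrow> bool" where
  "init_dominated w \<longleftrightarrow> w \<noteq> [] \<and> (\<forall>j. 1 \<le> j \<and> j < length w \<longrightarrow> w ! j < w ! 0)"

definition saillance_comp :: "nat list \<Rightarrow> nat list" where
  "saillance_comp \<sigma> = (THE c. \<exists>us. concat us = \<sigma> \<and> (\<forall>u\<in>set us. init_dominated u)
      \<and> sorted_wrt (<) (map hd us) \<and> c = map length us)"

definition inv_count :: "nat list \<Rightarrow> nat" where
  "inv_count \<sigma> = card {(i, j). i < j \<and> j < length \<sigma> \<and> \<sigma> ! j < \<sigma> ! i}"

definition is_composition :: "nat list \<Rightarrow> nat \<Rightarrow> bool" where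
  "is_composition I n \<longleftrightarrow> (\<forall>i\<in>set I. 0 < i) \<and> sum_list I = n"

definition comp_maj :: "nat list \<Rightarrow> nat" where
  "comp_maj I = (\<Sum>j<length I - 1. sum_list (take (j + 1) I))"

definition qint :: "nat \<Rightarrow> real poly" where
  "qint m = (\<Sum>k<m. monom 1 k)"

definition qfact :: "nat \<Rightarrow> real poly" where
  "qfact n = (\<Prod>m=1..n. qint m)"

end

theory Submission
  imports Defs
begin

(*
  Complementing inversions, the left-hand side is the generating function of coinversions
  of the permutations with saillance composition I.  The blocks of the saillance factorisation
  start exactly at the left-to-right maxima (records) of the permutation, so SC(sigma) = I iff the
  record positions of sigma are the partial sums 0, i_1, i_1 + i_2, ... of I.  Removing the last
  letter x of a permutation of a set A, the last position is a record iff x = max A, and the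
  coinversions lost are the rank of x in A.  Hence permutations of length n with record
  positions S have coinversion generating function prod_{k<n} (q^k if k in S, else [k]_q), and
  for the partial sums of I this product is q^maj(I) [n]_q! / prod_j [i_1 + ... + i_j]_q.
*)

section \<open>Inversions and coinversions\<close>

definition coinv_count :: "'a::linorder list \<Rightarrow> nat" where
  "coinv_count s = card {(i, j). i < j \<and> j < length s \<and> s ! i < s ! j}"

lemma card_pairs_snoc:
  "card {(i, j). i < j \<and> j < length (xs @ [x]) \<and> P ((xs @ [x]) ! i) ((xs @ [x]) ! j)}
   = card {(i, j). i < j \<and> j < length xs \<and> P (xs ! i) (xs ! j)}
     + card {i. i < length xs \<and> P (xs ! i) x}"
proof -
  let ?A = "{(i, j). i < j \<and> j < length xs \<and> P (xs ! i) (xs ! j)}"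
  let ?B = "{i. i < length xs \<and> P (xs ! i) x}"
  have "{(i, j). i < j \<and> j < length (xs @ [x]) \<and> P ((xs @ [x]) ! i) ((xs @ [x]) ! j)}
      = ?A \<union> (\<lambda>i. (i, length xs)) ` ?B"
    by (auto simp: nth_append less_Suc_eq)
  moreover have "finite ?A"
    by (rule finite_subset[of _ "{..<length xs} \<times> {..<length xs}"]) auto
  moreover have "card ((\<lambda>i. (i, length xs)) ` ?B) = card ?B"
    by (rule card_image) (auto simp: inj_on_def)
  moreover have "?A \<inter> (\<lambda>i. (i, length xs)) ` ?B = {}"
    by auto
  ultimately show ?thesis
    by (simp add: card_Un_disjoint)
qed

lemma card_nth_filter_distinct:
  assumes "distinct xs"
  shows "card {i. i < length xs \<and> P (xs ! i)} = card {y \<in> set xs. P y}"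
proof -
  have "{y \<in> set xs. P y} = (!) xs ` {i. i < length xs \<and> P (xs ! i)}"
    by (auto simp: set_conv_nth)
  moreover have "inj_on ((!) xs) {i. i < length xs \<and> P (xs ! i)}"
    using assms by (auto simp: inj_on_def nth_eq_iff_index_eq)
  ultimately show ?thesis
    by (simp add: card_image)
qed

lemma coinv_count_snoc:
  "distinct xs \<Longrightarrow> coinv_count (xs @ [x]) = coinv_count xs + card {y \<in> set xs. y < x}"
  unfolding coinv_count_def
  using card_pairs_snoc[of xs x "(<)"] card_nth_filter_distinct[of xs "\<lambda>y. y < x"] by simp

lemma inv_count_snoc:
  "distinct xs \<Longrightarrow> inv_count (xs @ [x]) = inv_count xs + card {y \<in> set xs. x < y}"
  unfolding inv_count_def
  using card_pairs_snoc[of xs x "\<lambda>a b. b < a"] card_nth_filter_distinct[of xs "\<lambda>y. x < y"]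
  by simp

lemma inv_count_add_coinv_count:
  "distinct s \<Longrightarrow> inv_count s + coinv_count s = length s choose 2"
proof (induction s rule: rev_induct)
  case Nil
  then show ?case
    by (simp add: inv_count_def coinv_count_def)
next
  case (snoc x xs)
  then have "distinct xs" "x \<notin> set xs"
    by auto
  have "card {y \<in> set xs. x < y} + card {y \<in> set xs. y < x}
      = card ({y \<in> set xs. x < y} \<union> {y \<in> set xs. y < x})"
    by (rule card_Un_disjoint[symmetric]) auto
  also have "{y \<in> set xs. x < y} \<union> {y \<in> set xs. y < x} = set xs"
    using \<open>x \<notin> set xs\<close> by auto (metis le_neq_trans not_less)
  finally have "card {y \<in> set xs. x < y} + card {y \<in> set xs. y < x} = length xs"
    using \<open>distinct xs\<close> by (simp add: distinct_card)
  moreover have "Suc (length xs) choose 2 = (length xs choose 2) + length xs"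
    by (simp add: numeral_2_eq_2)
  ultimately show ?case
    using snoc \<open>distinct xs\<close> by (simp add: inv_count_snoc coinv_count_snoc)
qed

section \<open>Records and the saillance composition\<close>

definition record_positions :: "'a::linorder list \<Rightarrow> nat set" where
  "record_positions s = {k. k < length s \<and> (\<forall>j<k. s ! j < s ! k)}"

lemma all_nth_append_less_iff:
  "(\<forall>j<length a + m. (a @ b) ! j < c) \<longleftrightarrow> (\<forall>y\<in>set a. y < c) \<and> (\<forall>j<m. b ! j < c)"
proof
  assume H: "\<forall>j<length a + m. (a @ b) ! j < c"
  have "a ! j < c" if "j < length a" for j
    using H[rule_format, of j] that by (simp add: nth_append)
  moreover have "b ! j < c" if "j < m" for j
    using H[rule_format, of "length a + j"] that by simp
  ultimately show "(\<forall>y\<in>set a. y < c) \<and> (\<forall>j<m. b ! j < c)"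
    by (simp add: all_set_conv_all_nth)
next
  assume "(\<forall>y\<in>set a. y < c) \<and> (\<forall>j<m. b ! j < c)"
  then show "\<forall>j<length a + m. (a @ b) ! j < c"
    by (auto simp: nth_append all_set_conv_all_nth)
qed

lemma record_positions_append:
  "record_positions (a @ b)
     = record_positions a \<union> (+) (length a) ` {k \<in> record_positions b. \<forall>y\<in>set a. y < b ! k}"
proof -
  have low: "k \<in> record_positions (a @ b) \<longleftrightarrow> k \<in> record_positions a" if "k < length a" for k
    using that by (auto simp: record_positions_def nth_append)
  have high: "length a + m \<in> record_positions (a @ b)
      \<longleftrightarrow> m \<in> record_positions b \<and> (\<forall>y\<in>set a. y < b ! m)" for m
    by (simp add: record_positions_def all_nth_append_less_iff) blast
  show ?thesis
  proof (rule set_eqI)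
    fix k
    show "k \<in> record_positions (a @ b)
      \<longleftrightarrow> k \<in> record_positions a \<union> (+) (length a) ` {k \<in> record_positions b. \<forall>y\<in>set a. y < b ! k}"
    proof (cases "k < length a")
      case True
      then show ?thesis
        using low by auto
    next
      case False
      then obtain m where "k = length a + m"
        using le_Suc_ex not_less by blast
      then show ?thesis
        using high by (auto simp: record_positions_def)
    qed
  qed
qed

lemma record_positions_snoc:
  "record_positions (xs @ [x])
     = record_positions xs \<union> (if \<forall>y\<in>set xs. y < x then {length xs} else {})"
  using record_positions_append[of xs "[x]"] by (auto simp: record_positions_def)

lemma record_positions_init_dominated:
  assumes "init_dominated w"
  shows "record_positions w = {0}"
proof -
  have "k = 0" if "k \<in> record_positions w" for k
  proof (rule ccontr)
    assume "k \<noteq> 0"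
    then have "w ! 0 < w ! k" "w ! k < w ! 0"
      using that assms by (auto simp: record_positions_def init_dominated_def)
    then show False
      by simp
  qed
  moreover have "0 \<in> record_positions w"
    using assms by (simp add: record_positions_def init_dominated_def)
  ultimately show ?thesis
    by blast
qed

lemma init_dominated_le_hd:
  assumes "init_dominated u" "y \<in> set u"
  shows "y \<le> hd u"
proof -
  obtain j where "j < length u" "y = u ! j"
    using assms(2) by (auto simp: in_set_conv_nth)
  moreover have "hd u = u ! 0"
    using assms(1) by (simp add: init_dominated_def hd_conv_nth)
  ultimately show ?thesis
    using assms(1) by (cases "j = 0") (auto simp: init_dominated_def less_imp_le)
qed

definition saillance_factorization :: "nat list list \<Rightarrow> nat list \<Rightarrow> bool" where
  "saillance_factorization us \<sigma> \<longleftrightarrow>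
     concat us = \<sigma> \<and> (\<forall>u\<in>set us. init_dominated u) \<and> sorted_wrt (<) (map hd us)"

definition block_starts :: "nat list \<Rightarrow> nat set" where
  "block_starts I = (\<lambda>j. sum_list (take j I)) ` {..<length I}"

lemma block_starts_snoc: "block_starts (I @ [i]) = insert (sum_list I) (block_starts I)"
  unfolding block_starts_def by (force simp: lessThan_Suc)

lemma record_positions_concat:
  "(\<forall>u\<in>set us. init_dominated u) \<Longrightarrow> sorted_wrt (<) (map hd us)
     \<Longrightarrow> record_positions (concat us) = block_starts (map length us)"
proof (induction us rule: rev_induct)
  case Nil
  then show ?case
    by (simp add: record_positions_def block_starts_def)
next
  case (snoc w us)
  have w: "init_dominated w"
    using snoc.prems by simp
  have "y < w ! 0" if y: "y \<in> set (concat us)" for y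
  proof -
    obtain u where u: "u \<in> set us" "y \<in> set u"
      using y by auto
    then have "y \<le> hd u"
      using snoc.prems(1) by (simp add: init_dominated_le_hd)
    also have "hd u < hd w"
      using snoc.prems(2) u(1) by (simp add: sorted_wrt_append)
    finally show ?thesis
      using w by (simp add: init_dominated_def hd_conv_nth)
  qed
  then have "{k \<in> record_positions w. \<forall>y\<in>set (concat us). y < w ! k} = {0}"
    using record_positions_init_dominated[OF w] by auto
  moreover have "record_positions (concat us) = block_starts (map length us)"
    using snoc by (simp add: sorted_wrt_append)
  ultimately show ?case
    by (simp add: record_positions_append block_starts_snoc length_concat)
qed

lemma record_positions_saillance_factorization:
  "saillance_factorization us \<sigma> \<Longrightarrow> record_positions \<sigma> = block_starts (map length us)"
  unfolding saillance_factorization_def using record_positions_concat by blast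

lemma saillance_factorization_le_hd_last:
  assumes fact: "saillance_factorization us \<sigma>" and y: "y \<in> set \<sigma>"
  shows "y \<le> hd (last us)"
proof -
  obtain u where u: "u \<in> set us" "y \<in> set u"
    using fact y by (auto simp: saillance_factorization_def)
  then obtain xs ys where us: "us = xs @ u # ys"
    by (meson split_list)
  have "y \<le> hd u"
    using fact u by (simp add: saillance_factorization_def init_dominated_le_hd)
  also have "hd u \<le> hd (last us)"
  proof (cases "ys = []")
    case False
    then have "hd u < hd (last ys)"
      using fact by (simp add: us saillance_factorization_def sorted_wrt_append)
    then show ?thesis
      using False by (simp add: us)
  qed (simp add: us)
  finally show ?thesis .
qed

lemma saillance_factorization_snoc_new_block:
  assumes fact: "saillance_factorization us \<sigma>" and less: "\<forall>y\<in>set \<sigma>. y < x"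
  shows "saillance_factorization (us @ [[x]]) (\<sigma> @ [x])"
proof -
  have "hd u < x" if "u \<in> set us" for u
  proof -
    have "u \<noteq> []"
      using fact that by (auto simp: saillance_factorization_def init_dominated_def)
    then have "hd u \<in> set u"
      by (rule hd_in_set)
    then have "hd u \<in> set \<sigma>"
      using fact that by (auto simp: saillance_factorization_def)
    then show ?thesis
      using less by simp
  qed
  then show ?thesis
    using fact by (auto simp: saillance_factorization_def sorted_wrt_append init_dominated_def)
qed

lemma saillance_factorization_snoc_last_block:
  assumes fact: "saillance_factorization (vs @ [w]) \<sigma>" and less: "x < hd w"
  shows "saillance_factorization (vs @ [w @ [x]]) (\<sigma> @ [x])"
proof -
  have w: "init_dominated w"
    using fact by (simp add: saillance_factorization_def)
  then have "w \<noteq> []"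
    by (simp add: init_dominated_def)
  then have "init_dominated (w @ [x])"
    using w less by (auto simp: init_dominated_def nth_append hd_conv_nth less_Suc_eq)
  then show ?thesis
    using fact \<open>w \<noteq> []\<close> by (auto simp: saillance_factorization_def sorted_wrt_append)
qed

lemma saillance_factorization_exists: "distinct \<sigma> \<Longrightarrow> \<exists>us. saillance_factorization us \<sigma>"
proof (induction \<sigma> rule: rev_induct)
  case Nil
  have "saillance_factorization [] []"
    by (simp add: saillance_factorization_def)
  then show ?case ..
next
  case (snoc x \<sigma>)
  then obtain us where fact: "saillance_factorization us \<sigma>"
    by auto
  show ?case
  proof (cases "\<forall>y\<in>set \<sigma>. y < x")
    case True
    then show ?thesis
      using saillance_factorization_snoc_new_block[OF fact] by blast
  next
    case False
    then obtain y where y: "y \<in> set \<sigma>" "x \<le> y"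
      by (auto simp: not_less)
    then have "us \<noteq> []"
      using fact by (auto simp: saillance_factorization_def)
    then obtain vs w where us: "us = vs @ [w]"
      by (metis append_butlast_last_id)
    have "w \<noteq> []"
      using fact by (simp add: us saillance_factorization_def init_dominated_def)
    then have "hd w \<in> set \<sigma>"
      using fact by (auto simp: us saillance_factorization_def)
    then have "x \<noteq> hd w"
      using snoc.prems by auto
    moreover have "x \<le> hd w"
      using y saillance_factorization_le_hd_last[OF fact y(1)] by (simp add: us)
    ultimately have "x < hd w"
      by simp
    then show ?thesis
      using saillance_factorization_snoc_last_block[OF fact[unfolded us]] by blast
  qed
qed

lemma sum_list_take_strict_mono:
  fixes I :: "nat list"
  assumes "0 \<notin> set I"
  shows "strict_mono_on {..length I} (\<lambda>j. sum_list (take j I))"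
proof (rule strict_mono_onI)
  fix i j
  assume "i \<in> {..length I}" "j \<in> {..length I}" "i < j"
  then have "i < length I"
    by simp
  have "j - i = Suc (j - Suc i)"
    using \<open>i < j\<close> by simp
  moreover have "drop i I = I ! i # drop (Suc i) I"
    using \<open>i < length I\<close> by (simp add: Cons_nth_drop_Suc)
  ultimately have "take (j - i) (drop i I) = I ! i # take (j - Suc i) (drop (Suc i) I)"
    by simp
  moreover have "take j I = take i I @ take (j - i) (drop i I)"
    using \<open>i < j\<close> take_add[of i "j - i" I] by simp
  moreover have "0 < I ! i"
    using assms nth_mem[OF \<open>i < length I\<close>] by (metis not_gr0)
  ultimately show "sum_list (take i I) < sum_list (take j I)"
    by simp
qed

definition partial_sums :: "nat list \<Rightarrow> nat list" where
  "partial_sums I = map (\<lambda>j. sum_list (take j I)) [0..<Suc (length I)]"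

lemma set_partial_sums: "set (partial_sums I) = insert (sum_list I) (block_starts I)"
proof -
  have "{..<Suc (length I)} = insert (length I) {..<length I}"
    by auto
  then show ?thesis
    by (simp add: partial_sums_def block_starts_def atLeast0LessThan del: upt_Suc)
qed

lemma sorted_wrt_partial_sums: "0 \<notin> set I \<Longrightarrow> sorted_wrt (<) (partial_sums I)"
  using sum_list_take_strict_mono[of I]
  by (auto simp: sorted_wrt_iff_nth_less partial_sums_def strict_mono_on_def simp del: upt_Suc)

lemma inj_partial_sums: "inj partial_sums"
proof (rule injI)
  fix I J
  assume eq: "partial_sums I = partial_sums J"
  have nth: "partial_sums L ! k = sum_list (take k L)" if "k \<le> length L" for L k
    using that by (simp add: partial_sums_def nth_map_upt del: upt_Suc)
  have "I ! j = partial_sums I ! Suc j - partial_sums I ! j" if "j < length I" for I j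
    using that by (simp add: nth take_Suc_conv_app_nth)
  moreover have "length I = length J"
    using arg_cong[OF eq, of length] by (simp add: partial_sums_def)
  ultimately show "I = J"
    using eq by (metis nth_equalityI)
qed

lemma block_starts_inj:
  assumes "0 \<notin> set I" "0 \<notin> set J" "sum_list I = sum_list J" "block_starts I = block_starts J"
  shows "I = J"
proof -
  have "partial_sums I = partial_sums J"
    using assms sorted_wrt_partial_sums[of I] sorted_wrt_partial_sums[of J]
    by (intro sorted_distinct_set_unique) (auto simp: strict_sorted_iff set_partial_sums)
  then show ?thesis
    using inj_partial_sums by (simp add: inj_eq)
qed

lemma saillance_factorization_lengths:
  "saillance_factorization us \<sigma> \<Longrightarrow> 0 \<notin> set (map length us) \<and> sum_list (map length us) = length \<sigma>"
  by (auto simp: saillance_factorization_def init_dominated_def length_concat)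

lemma saillance_comp_eq:
  assumes fact: "saillance_factorization us \<sigma>"
  shows "saillance_comp \<sigma> = map length us"
  unfolding saillance_comp_def
proof (rule the_equality)
  show "\<exists>vs. concat vs = \<sigma> \<and> (\<forall>u\<in>set vs. init_dominated u)
      \<and> sorted_wrt (<) (map hd vs) \<and> map length us = map length vs"
    using fact by (auto simp: saillance_factorization_def)
next
  fix c
  assume "\<exists>vs. concat vs = \<sigma> \<and> (\<forall>u\<in>set vs. init_dominated u)
      \<and> sorted_wrt (<) (map hd vs) \<and> c = map length vs"
  then obtain vs where fact': "saillance_factorization vs \<sigma>" and c: "c = map length vs"
    by (auto simp: saillance_factorization_def)
  have "block_starts (map length vs) = block_starts (map length us)"
    using record_positions_saillance_factorization[OF fact] record_positions_saillance_factorization[OF fact']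
    by simp
  then show "c = map length us"
    using c block_starts_inj saillance_factorization_lengths[OF fact]
      saillance_factorization_lengths[OF fact'] by metis
qed

lemma saillance_comp_eq_iff_record_positions:
  assumes "distinct \<sigma>" "0 \<notin> set I" "sum_list I = length \<sigma>"
  shows "saillance_comp \<sigma> = I \<longleftrightarrow> record_positions \<sigma> = block_starts I"
proof -
  obtain us where fact: "saillance_factorization us \<sigma>"
    using saillance_factorization_exists[OF assms(1)] ..
  then show ?thesis
    using assms block_starts_inj saillance_factorization_lengths[OF fact]
    by (auto simp: saillance_comp_eq[OF fact] record_positions_saillance_factorization[OF fact])
qed

section \<open>Counting permutations by records and coinversions\<close>

lemma bij_betw_rank:
  fixes A :: "'a::linorder set"
  assumes "finite A"
  shows "bij_betw (\<lambda>x. card {y \<in> A. y < x}) A {..<card A}"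
proof -
  let ?rank = "\<lambda>x. card {y \<in> A. y < x}"
  have less: "?rank x < ?rank x'" if "x \<in> A" "x < x'" for x x'
    by (rule psubset_card_mono) (use assms that in auto)
  have inj: "inj_on ?rank A"
  proof (rule inj_onI)
    fix x x'
    assume "x \<in> A" "x' \<in> A" "?rank x = ?rank x'"
    then show "x = x'"
      using less[of x x'] less[of x' x] by (cases x x' rule: linorder_cases) auto
  qed
  have "?rank x < card A" if "x \<in> A" for x
    by (rule psubset_card_mono) (use assms that in auto)
  then have "?rank ` A = {..<card A}"
    using assms inj by (intro card_subset_eq) (auto simp: card_image)
  then show ?thesis
    using inj by (simp add: bij_betw_def)
qed

lemma sum_monom_rank:
  fixes A :: "'a::linorder set"
  assumes "finite A"
  shows "(\<Sum>x\<in>A. monom (1::real) (card {y \<in> A. y < x})) = qint (card A)"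
  using sum.reindex_bij_betw[OF bij_betw_rank[OF assms], of "monom 1"] by (simp add: qint_def)

lemma card_less_Max:
  fixes A :: "'a::linorder set"
  assumes "finite A" "A \<noteq> {}"
  shows "card {y \<in> A. y < Max A} = card A - 1"
proof -
  have "{y \<in> A. y < Max A} = A - {Max A}"
    using assms by (auto simp: order.not_eq_order_implies_strict)
  then show ?thesis
    using assms by simp
qed

lemma permutations_of_set_nonempty_snoc:
  assumes "A \<noteq> {}"
  shows "permutations_of_set A = (\<Union>x\<in>A. (\<lambda>xs. xs @ [x]) ` permutations_of_set (A - {x}))"
proof -
  have snoc: "rev ` (\<lambda>xs. x # xs) ` permutations_of_set B = (\<lambda>xs. xs @ [x]) ` permutations_of_set B"
    for x :: 'a and B
  proof -
    have "rev ` (\<lambda>xs. x # xs) ` permutations_of_set B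
        = (\<lambda>xs. xs @ [x]) ` rev ` permutations_of_set B"
      by (simp only: image_image rev.simps)
    then show ?thesis
      by simp
  qed
  have "permutations_of_set A = rev ` permutations_of_set A"
    by simp
  also have "\<dots> = (\<Union>x\<in>A. rev ` (\<lambda>xs. x # xs) ` permutations_of_set (A - {x}))"
    by (subst permutations_of_set_nonempty[OF assms]) (simp only: image_UN)
  finally show ?thesis
    by (simp only: snoc)
qed

lemma sum_permutations_of_set_snoc:
  assumes "finite A" "A \<noteq> {}"
  shows "(\<Sum>s\<in>permutations_of_set A. g s)
       = (\<Sum>x\<in>A. \<Sum>t\<in>permutations_of_set (A - {x}). g (t @ [x]))"
proof -
  have "(\<Sum>s\<in>permutations_of_set A. g s)
      = (\<Sum>x\<in>A. \<Sum>s\<in>(\<lambda>t. t @ [x]) ` permutations_of_set (A - {x}). g s)"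
    unfolding permutations_of_set_nonempty_snoc[OF assms(2)]
    by (rule sum.UNION_disjoint) (use assms in auto)
  also have "\<dots> = (\<Sum>x\<in>A. \<Sum>t\<in>permutations_of_set (A - {x}). g (t @ [x]))"
    by (rule sum.cong) (auto simp: sum.reindex inj_on_def)
  finally show ?thesis .
qed

lemma record_positions_snoc_permutation:
  fixes A :: "'a::linorder set"
  assumes "finite A" "x \<in> A" "t \<in> permutations_of_set (A - {x})"
  shows "record_positions (t @ [x])
       = (if x = Max A then insert (length t) (record_positions t) else record_positions t)"
proof -
  have "set t = A - {x}"
    using assms(3) by (simp add: permutations_of_set_def)
  have "(\<forall>y\<in>set t. y < x) \<longleftrightarrow> x = Max A"
  proof
    assume less: "\<forall>y\<in>set t. y < x"
    have "y \<le> x" if "y \<in> A" for y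
    proof (cases "y = x")
      case False
      then have "y \<in> set t"
        using that \<open>set t = A - {x}\<close> by simp
      then show ?thesis
        using less by (simp add: less_imp_le)
    qed simp
    then show "x = Max A"
      using assms(1,2) by (intro Max_eqI[symmetric]) auto
  next
    assume "x = Max A"
    show "\<forall>y\<in>set t. y < x"
    proof
      fix y
      assume "y \<in> set t"
      then have "y \<in> A" "y \<noteq> x"
        using \<open>set t = A - {x}\<close> by auto
      then show "y < x"
        using Max_ge[OF assms(1) \<open>y \<in> A\<close>] \<open>x = Max A\<close> by (simp add: less_le)
    qed
  qed
  then show ?thesis
    by (simp add: record_positions_snoc)
qed

lemma coinv_count_snoc_permutation:
  fixes A :: "'a::linorder set"
  assumes "t \<in> permutations_of_set (A - {x})"
  shows "coinv_count (t @ [x]) = coinv_count t + card {y \<in> A. y < x}"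
proof -
  have "set t = A - {x}" "distinct t"
    using assms by (simp_all add: permutations_of_set_def)
  moreover have "{y \<in> A - {x}. y < x} = {y \<in> A. y < x}"
    by auto
  ultimately show ?thesis
    by (simp add: coinv_count_snoc)
qed

(* Appending a letter at position k adds as many coinversions as its rank among the first k + 1
   letters: this rank is k at a record and ranges over 0, ..., k - 1 otherwise. *)
definition records_poly :: "nat \<Rightarrow> nat set \<Rightarrow> real poly" where
  "records_poly n S = (\<Prod>k<n. if k \<in> S then monom 1 k else qint k)"

lemma records_poly_Suc:
  "records_poly (Suc n) S = (if n \<in> S then monom 1 n else qint n) * records_poly n S"
  by (simp add: records_poly_def mult.commute)

lemma records_poly_remove: "records_poly n (S - {n}) = records_poly n S"
  unfolding records_poly_def by (rule prod.cong) auto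

lemma coinv_record_weight_snoc:
  fixes A :: "'a::linorder set"
  assumes "finite A" "card A = Suc n" "x \<in> A" "t \<in> permutations_of_set (A - {x})"
  shows "(if record_positions (t @ [x]) = S then monom (1::real) (coinv_count (t @ [x])) else 0)
       = (if n \<in> S \<longleftrightarrow> x = Max A then monom 1 (card {y \<in> A. y < x}) else 0)
         * (if record_positions t = S - {n} then monom 1 (coinv_count t) else 0)"
proof -
  have "length t = n"
    using assms by (simp add: length_finite_permutations_of_set)
  then have "n \<notin> record_positions t"
    by (simp add: record_positions_def)
  moreover have "card {y \<in> A. y < Max A} = n"
    using assms card_less_Max[of A] by auto
  ultimately show ?thesis
    using record_positions_snoc_permutation[OF assms(1,3,4)] coinv_count_snoc_permutation[OF assms(4)]
      \<open>length t = n\<close> by (auto simp: mult_monom add.commute)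
qed

lemma sum_record_weights:
  fixes A :: "'a::linorder set"
  assumes fin: "finite A" and card: "card A = Suc n"
  shows "(\<Sum>x\<in>A. if P \<longleftrightarrow> x = Max A then monom (1::real) (card {y \<in> A. y < x}) else 0)
       = (if P then monom 1 n else qint n)"
proof -
  let ?rank = "\<lambda>x. card {y \<in> A. y < x}"
  have ne: "A \<noteq> {}"
    using card by auto
  have rank_Max: "?rank (Max A) = n"
    using card_less_Max[OF fin ne] card by simp
  have "qint (Suc n) = (\<Sum>x\<in>A. monom 1 (?rank x))"
    using sum_monom_rank[OF fin] card by simp
  also have "\<dots> = monom 1 n + (\<Sum>x\<in>A - {Max A}. monom 1 (?rank x))"
    using sum.remove[OF fin Max_in[OF fin ne], of "\<lambda>x. monom 1 (?rank x)"] rank_Max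
    by simp
  finally have "(\<Sum>x\<in>A - {Max A}. monom 1 (?rank x)) = qint n"
    by (simp add: qint_def)
  then show ?thesis
    using rank_Max fin ne by (simp add: sum.delta sum.remove[OF fin Max_in[OF fin ne]])
qed

lemma sum_coinv_count_record_positions:
  fixes A :: "'a::linorder set"
  assumes "finite A" "S \<subseteq> {..<card A}"
  shows "(\<Sum>s\<in>permutations_of_set A.
            if record_positions s = S then monom (1::real) (coinv_count s) else 0)
       = records_poly (card A) S"
  using assms
proof (induction "card A" arbitrary: A S)
  case 0
  then have "A = {}" "S = {}"
    by auto
  then show ?case
    by (simp add: records_poly_def record_positions_def coinv_count_def)
next
  case (Suc n)
  let ?w = "\<lambda>x. if n \<in> S \<longleftrightarrow> x = Max A then monom (1::real) (card {y \<in> A. y < x}) else 0"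
  have fin: "finite A" and ne: "A \<noteq> {}"
    using Suc by auto
  have IH: "(\<Sum>t\<in>permutations_of_set (A - {x}).
              if record_positions t = S - {n} then monom (1::real) (coinv_count t) else 0)
          = records_poly n S" if "x \<in> A" for x
  proof -
    have "card (A - {x}) = n" "S - {n} \<subseteq> {..<n}"
      using Suc.hyps(2) Suc.prems that by (auto simp: less_Suc_eq)
    then show ?thesis
      using Suc.hyps(1)[of "A - {x}" "S - {n}"] fin by (simp add: records_poly_remove)
  qed
  have "(\<Sum>s\<in>permutations_of_set A.
            if record_positions s = S then monom (1::real) (coinv_count s) else 0)
      = (\<Sum>x\<in>A. \<Sum>t\<in>permutations_of_set (A - {x}).
            ?w x * (if record_positions t = S - {n} then monom 1 (coinv_count t) else 0))"
    using coinv_record_weight_snoc[OF fin Suc.hyps(2)[symmetric]]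
    by (simp add: sum_permutations_of_set_snoc[OF fin ne])
  also have "\<dots> = (\<Sum>x\<in>A. ?w x) * records_poly n S"
    using IH by (simp add: sum_distrib_left[symmetric] sum_distrib_right)
  also have "\<dots> = records_poly (card A) S"
    using sum_record_weights[OF fin Suc.hyps(2)[symmetric]] Suc.hyps(2)[symmetric]
    by (simp add: records_poly_Suc)
  finally show ?case .
qed

section \<open>The q-factorial quotient\<close>

lemma qint_nonzero:
  assumes "0 < m"
  shows "qint m \<noteq> 0"
proof -
  have "poly (qint m) 1 = real m"
    by (simp add: qint_def poly_sum poly_monom)
  then show ?thesis
    using assms by auto
qed

lemma prod_monom_one: "(\<Prod>k\<in>A. monom (1::'a::comm_semiring_1) k) = monom 1 (\<Sum>A)"
  by (induction A rule: infinite_finite_induct) (simp_all add: mult_monom)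

lemma records_poly_eq:
  assumes "S \<subseteq> {..<n}"
  shows "records_poly n S = monom 1 (\<Sum>S) * (\<Prod>k\<in>{..<n} - S. qint k)"
proof -
  have "records_poly n S
      = (\<Prod>k\<in>{..<n} \<inter> {k. k \<in> S}. monom 1 k) * (\<Prod>k\<in>{..<n} \<inter> - {k. k \<in> S}. qint k)"
    unfolding records_poly_def by (rule prod.If_cases) simp
  also have "{..<n} \<inter> {k. k \<in> S} = S"
    using assms by auto
  also have "{..<n} \<inter> - {k. k \<in> S} = {..<n} - S"
    by auto
  finally show ?thesis
    by (simp add: prod_monom_one)
qed

lemma lessThan_Diff_image_Un_image_Suc:
  fixes s :: "nat \<Rightarrow> nat"
  assumes mono: "strict_mono_on {..r} s" and "s 0 = 0" and "s r = n"
  shows "({..<n} - s ` {..<r}) \<union> (\<lambda>j. s (Suc j)) ` {..<r} = {1..n}"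
proof -
  have "k \<in> {1..n}" if "k \<in> {..<n} - s ` {..<r}" for k
  proof -
    have "r = 0 \<Longrightarrow> n = 0" "0 < r \<Longrightarrow> 0 \<in> s ` {..<r}"
      using assms by (auto simp: image_iff intro: bexI[of _ 0])
    then show ?thesis
      using that by (cases "r = 0") (auto simp: Suc_le_eq)
  qed
  moreover have "s (Suc j) \<in> {1..n}" if "j < r" for j
    using strict_mono_on_less[OF mono, of 0 "Suc j"] strict_mono_on_less[OF mono, of "Suc j" r]
      that assms by (cases "Suc j = r") auto
  moreover have "k \<in> ({..<n} - s ` {..<r}) \<union> (\<lambda>j. s (Suc j)) ` {..<r}" if "k \<in> {1..n}" for k
  proof (cases "k \<in> s ` {..<r} \<or> k = n")
    case True
    then have "k \<in> s ` {..r}"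
      using \<open>s r = n\<close> by auto
    then obtain j where "j \<le> r" "s j = k"
      by auto
    moreover have "j \<noteq> 0"
      using that \<open>s 0 = 0\<close> \<open>s j = k\<close> by (cases j) auto
    ultimately show ?thesis
      by (auto simp: image_iff intro: bexI[of _ "j - 1"])
  qed (use that in auto)
  ultimately show ?thesis
    by blast
qed

lemma lessThan_Diff_image_Int_image_Suc:
  fixes s :: "nat \<Rightarrow> nat"
  assumes mono: "strict_mono_on {..r} s" and "s r = n"
  shows "({..<n} - s ` {..<r}) \<inter> (\<lambda>j. s (Suc j)) ` {..<r} = {}"
proof (intro equals0I)
  fix k
  assume "k \<in> ({..<n} - s ` {..<r}) \<inter> (\<lambda>j. s (Suc j)) ` {..<r}"
  then obtain j where "j < r" "s (Suc j) < n" "s (Suc j) \<notin> s ` {..<r}"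
    by auto
  then show False
    using strict_mono_on_less[OF mono, of "Suc j" r] assms by auto
qed

lemma records_poly_eq_qfact_div:
  fixes s :: "nat \<Rightarrow> nat"
  assumes mono: "strict_mono_on {..r} s" and "s 0 = 0" and "s r = n"
  shows "records_poly n (s ` {..<r})
       = monom 1 (\<Sum>j<r. s j) * qfact n div (\<Prod>j<r. qint (s (Suc j)))"
proof -
  let ?S = "s ` {..<r}" and ?E = "(\<lambda>j. s (Suc j)) ` {..<r}"
  have inj: "inj_on s {..r}"
    using mono by (rule strict_mono_on_imp_inj_on)
  then have "inj_on s {..<r}"
    by (rule inj_on_subset) auto
  have "?S \<subseteq> {..<n}"
    using strict_mono_onD[OF mono] assms by auto
  then have "records_poly n ?S = monom 1 (\<Sum>j<r. s j) * (\<Prod>k\<in>{..<n} - ?S. qint k)"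
    by (simp add: records_poly_eq sum.reindex \<open>inj_on s {..<r}\<close>)
  moreover have "qfact n = (\<Prod>k\<in>{..<n} - ?S. qint k) * (\<Prod>k\<in>?E. qint k)"
    unfolding qfact_def lessThan_Diff_image_Un_image_Suc[OF assms, symmetric]
    by (rule prod.union_disjoint) (simp_all add: lessThan_Diff_image_Int_image_Suc[OF mono \<open>s r = n\<close>])
  moreover have "(\<Prod>k\<in>?E. qint k) = (\<Prod>j<r. qint (s (Suc j)))"
  proof -
    have "inj_on (\<lambda>j. s (Suc j)) {..<r}"
    proof (rule inj_onI)
      fix i j
      assume "i \<in> {..<r}" "j \<in> {..<r}" "s (Suc i) = s (Suc j)"
      then have "Suc i = Suc j"
        using inj_onD[OF inj, of "Suc i" "Suc j"] by simp
      then show "i = j"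
        by simp
    qed
    then show ?thesis
      by (simp add: prod.reindex)
  qed
  moreover have "(\<Prod>j<r. qint (s (Suc j))) \<noteq> 0"
    using strict_mono_onD[OF mono, of 0] \<open>s 0 = 0\<close> by (auto simp: qint_nonzero)
  ultimately show ?thesis
    by (simp add: mult.assoc)
qed

lemma comp_maj_eq_sum_take: "comp_maj I = (\<Sum>j<length I. sum_list (take j I))"
proof (cases I)
  case (Cons i I')
  then show ?thesis
    by (simp only: comp_maj_def length_Cons sum.lessThan_Suc_shift) simp
qed (simp add: comp_maj_def)

lemma sum_saillance_comp_eq_sum_record_positions:
  fixes A :: "nat set"
  assumes "0 \<notin> set I" "sum_list I = card A"
  shows "(\<Sum>\<sigma>\<in>{\<sigma> \<in> permutations_of_set A. saillance_comp \<sigma> = I}.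
            monom (1::real) ((card A choose 2) - inv_count \<sigma>))
       = (\<Sum>\<sigma>\<in>permutations_of_set A.
            if record_positions \<sigma> = block_starts I then monom 1 (coinv_count \<sigma>) else 0)"
proof -
  have "(\<Sum>\<sigma>\<in>{\<sigma> \<in> permutations_of_set A. saillance_comp \<sigma> = I}.
            monom (1::real) ((card A choose 2) - inv_count \<sigma>))
      = (\<Sum>\<sigma>\<in>permutations_of_set A.
            if saillance_comp \<sigma> = I then monom 1 ((card A choose 2) - inv_count \<sigma>) else 0)"
    by (simp add: sum.inter_filter)
  also have "\<dots> = (\<Sum>\<sigma>\<in>permutations_of_set A.
            if record_positions \<sigma> = block_starts I then monom 1 (coinv_count \<sigma>) else 0)"
  proof (rule sum.cong[OF refl])
    fix \<sigma>
    assume "\<sigma> \<in> permutations_of_set A"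
    then have "distinct \<sigma>" "length \<sigma> = card A"
      by (simp_all add: permutations_of_set_def length_finite_permutations_of_set)
    then show "(if saillance_comp \<sigma> = I then monom (1::real) ((card A choose 2) - inv_count \<sigma>) else 0)
        = (if record_positions \<sigma> = block_starts I then monom 1 (coinv_count \<sigma>) else 0)"
      using inv_count_add_coinv_count saillance_comp_eq_iff_record_positions assms
      by (metis add_diff_cancel_left')
  qed
  finally show ?thesis .
qed

theorem mainTheorem1:
  fixes n :: nat and I :: "nat list"
  assumes "n \<ge> 1" and "is_composition I n"
  shows "(\<Sum>\<sigma>\<in>{\<sigma> \<in> permutations_of_set {1..n}. saillance_comp \<sigma> = I}.
            monom (1::real) ((n choose 2) - inv_count \<sigma>))
         = monom 1 (comp_maj I) * qfact n
           div (\<Prod>j<length I. qint (sum_list (take (j + 1) I)))"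
proof -
  have I: "0 \<notin> set I" "sum_list I = n"
    using assms(2) by (auto simp: is_composition_def)
  have mono: "strict_mono_on {..length I} (\<lambda>j. sum_list (take j I))"
    using sum_list_take_strict_mono[OF I(1)] .
  have "block_starts I \<subseteq> {..<n}"
    using strict_mono_onD[OF mono, of _ "length I"] I(2) by (auto simp: block_starts_def)
  have "(\<Sum>\<sigma>\<in>{\<sigma> \<in> permutations_of_set {1..n}. saillance_comp \<sigma> = I}.
            monom (1::real) ((n choose 2) - inv_count \<sigma>))
      = (\<Sum>\<sigma>\<in>permutations_of_set {1..n}.
            if record_positions \<sigma> = block_starts I then monom 1 (coinv_count \<sigma>) else 0)"
    using sum_saillance_comp_eq_sum_record_positions[of I "{1..n}"] I by simp
  also have "\<dots> = records_poly n (block_starts I)"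
    using sum_coinv_count_record_positions[of "{1..n}"] \<open>block_starts I \<subseteq> {..<n}\<close> by simp
  also have "\<dots> = monom 1 (comp_maj I) * qfact n
                   div (\<Prod>j<length I. qint (sum_list (take (j + 1) I)))"
    using records_poly_eq_qfact_div[OF mono] I(2) by (simp add: block_starts_def comp_maj_eq_sum_take)
  finally show ?thesis .
qed

end
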